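(* Let $G$ be a group of order $k\ge2$. Then, as $n\to\infty$, the $(G,* )$-graded $n$-codimension of $M_k(\mathbb{C})$ equipped with the $G$-crossed-product grading and the transpose involution satisfies $$c^G_n\sim\frac{k}{2^{k-1}}\,k^{2n}.$$
   Context: Let $G=\{g_1=e,\dots,g_k\}$. Index rows/columns of $k\times k$ matrices by $G$, let $E_{a,b}$ be matrix units, $P_g=\sum_{h\in G}E_{h,hg}$, and $M_k(\mathbb{C})_g=\{DP_g: D\text{ diagonal}\}$ (the $G$-crossed-product grading); the involution $*$ is transpose. $F=\mathbb{Q}\{x_{i,g},x^*_{i,g}: i\ge1,g\in G\}$ is the free associative algebra; $I(G,* )$ is the set of $f\in F$ vanishing under every substitution $x_{i,g}\mapsto A_{i,g}\in M_k(\mathbb{C})_g$, $x^*_{i,g}\mapsto A_{i,g}^T$. $P^G_n$ is the $\mathbb{Q}$-span of the monomials $x^{\epsilon_1}_{\sigma(1),h_1}\cdots x^{\epsilon_n}_{\sigma(n),h_n}$ with $\sigma\in S_n$, $h_i\in G$, each $\epsilon_i\in\{\text{nothing},*\}$, and $c^G_n=\dim_{\mathbb{Q}}P^G_n/(P^G_n\cap I(G,* ))$. $a_n\sim b_n$ means $a_n/b_n\to1$. *)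

theory Defs
  imports "HOL-Algebra.Group" "HOL-Library.Function_Algebras" "HOL-Library.Landau_Symbols" Complex_Main
begin

text \<open>Letters of the free algebra: (i, g, starred) stands for x_{i,g} (starred = False)
  or x^*_{i,g} (starred = True).\<close>

type_synonym 'a letter = "nat \<times> 'a \<times> bool"
type_synonym 'a word = "'a letter list"
type_synonym 'a fpoly = "'a word \<Rightarrow> rat"

definition gletter :: "('a, 'b) monoid_scheme \<Rightarrow> 'a letter \<Rightarrow> bool" where
  "gletter G l \<longleftrightarrow> 1 \<le> fst l \<and> fst (snd l) \<in> carrier G"

definition free_alg :: "('a, 'b) monoid_scheme \<Rightarrow> 'a fpoly set" where
  "free_alg G = {f. finite {w. f w \<noteq> 0} \<and> (\<forall>w. f w \<noteq> 0 \<longrightarrow> (\<forall>l\<in>set w. gletter G l))}"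

text \<open>k x k complex matrices with rows/columns indexed by the elements of G
  (entries outside carrier G x carrier G are zero).\<close>

type_synonym 'a mat = "'a \<Rightarrow> 'a \<Rightarrow> complex"

definition gmat_mult :: "('a, 'b) monoid_scheme \<Rightarrow> 'a mat \<Rightarrow> 'a mat \<Rightarrow> 'a mat" where
  "gmat_mult G X Y = (\<lambda>a b. \<Sum>c\<in>carrier G. X a c * Y c b)"

definition gmat_one :: "('a, 'b) monoid_scheme \<Rightarrow> 'a mat" where
  "gmat_one G = (\<lambda>a b. if a = b \<and> a \<in> carrier G then 1 else 0)"

definition gmat_transpose :: "'a mat \<Rightarrow> 'a mat" where
  "gmat_transpose X = (\<lambda>a b. X b a)"

text \<open>Homogeneous component of degree g of the G-crossed-product grading:
  M_k(C)_g = {D P_g : D diagonal}, where P_g = sum_h E_{h, h g}.\<close>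

definition graded_comp :: "('a, 'b) monoid_scheme \<Rightarrow> 'a \<Rightarrow> 'a mat set" where
  "graded_comp G g = {X. \<exists>d. X = (\<lambda>a b. if a \<in> carrier G \<and> b \<in> carrier G \<and> b = a \<otimes>\<^bsub>G\<^esub> g
                                        then d a else 0)}"

definition graded_subst :: "('a, 'b) monoid_scheme \<Rightarrow> (nat \<Rightarrow> 'a \<Rightarrow> 'a mat) \<Rightarrow> bool" where
  "graded_subst G A \<longleftrightarrow> (\<forall>i g. 1 \<le> i \<longrightarrow> g \<in> carrier G \<longrightarrow> A i g \<in> graded_comp G g)"

definition eval_letter :: "(nat \<Rightarrow> 'a \<Rightarrow> 'a mat) \<Rightarrow> 'a letter \<Rightarrow> 'a mat" where
  "eval_letter A l = (case l of (i, g, s) \<Rightarrow> if s then gmat_transpose (A i g) else A i g)"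

definition eval_word :: "('a, 'b) monoid_scheme \<Rightarrow> (nat \<Rightarrow> 'a \<Rightarrow> 'a mat) \<Rightarrow> 'a word \<Rightarrow> 'a mat" where
  "eval_word G A w = foldr (\<lambda>l M. gmat_mult G (eval_letter A l) M) w (gmat_one G)"

definition eval_poly :: "('a, 'b) monoid_scheme \<Rightarrow> (nat \<Rightarrow> 'a \<Rightarrow> 'a mat) \<Rightarrow> 'a fpoly \<Rightarrow> 'a mat" where
  "eval_poly G A f = (\<lambda>a b. \<Sum>w\<in>{w. f w \<noteq> 0}. of_rat (f w) * eval_word G A w a b)"

definition gid :: "('a, 'b) monoid_scheme \<Rightarrow> 'a fpoly set" where
  "gid G = {f \<in> free_alg G. \<forall>A. graded_subst G A \<longrightarrow>
              (\<forall>a\<in>carrier G. \<forall>b\<in>carrier G. eval_poly G A f a b = 0)}"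

definition mlmon :: "('a, 'b) monoid_scheme \<Rightarrow> nat \<Rightarrow> 'a word set" where
  "mlmon G n = {w. distinct (map fst w) \<and> set (map fst w) = {1..n} \<and> (\<forall>l\<in>set w. fst (snd l) \<in> carrier G)}"

definition Pn :: "('a, 'b) monoid_scheme \<Rightarrow> nat \<Rightarrow> 'a fpoly set" where
  "Pn G n = {f \<in> free_alg G. \<forall>w. f w \<noteq> 0 \<longrightarrow> w \<in> mlmon G n}"

definition qscale :: "rat \<Rightarrow> 'a fpoly \<Rightarrow> 'a fpoly" where
  "qscale c f = (\<lambda>w. c * f w)"

definition qdim :: "'a fpoly set \<Rightarrow> nat" where
  "qdim S = vector_space.dim qscale S"

text \<open>c^G_n = dim_Q P^G_n / (P^G_n \<inter> I(G,*)) = dim P^G_n - dim (P^G_n \<inter> I(G,*))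
  (finite-dimensional spaces).\<close>

definition gcodim :: "('a, 'b) monoid_scheme \<Rightarrow> nat \<Rightarrow> nat" where
  "gcodim G n = qdim (Pn G n) - qdim (Pn G n \<inter> gid G)"

end

theory Submission
  imports Defs
begin

text \<open>With \<open>x\<^sub>i\<^sub>,\<^sub>g \<mapsto> D\<^sub>i P\<^sub>g\<close>, a multilinear monomial evaluated at row \<open>a\<close> follows a walk in the complete
  graph on \<open>G\<close>: each variable \<open>x\<^sub>i\<^sub>,\<^sub>g\<close> (or \<open>x\<^sup>*\<^sub>i\<^sub>,\<^sub>g\<close>) traverses the edge \<open>{c, c g}\<close> and contributes the
  entry \<open>D\<^sub>i(c)\<close>. The evaluation is therefore determined by the signature of the monomial, i.e.
  the end of the walk from \<open>1\<close> together with the edge traversed by each variable, and evaluating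
  at 0/1 substitutions shows that distinct signatures are linearly independent. Hence \<open>c\<^sup>G\<^sub>n\<close> is the
  number of signatures: pairs \<open>(t, e)\<close> of a vertex and a sequence of \<open>n\<close> labelled edges admitting an
  Euler trail from \<open>1\<close> to \<open>t\<close>. By Euler's theorem these are the edge sequences whose odd vertices
  are \<open>{1} \<triangle> {t}\<close>, up to disconnected ones; the latter lack an edge from \<open>1\<close> to some vertex, so there
  are \<open>O((k\<^sup>2 - 1)\<^sup>n)\<close> of them. A character sum over \<open>2\<^sup>G\<close> counts the edge sequences with prescribed
  odd vertices as \<open>2\<^sup>1\<^sup>-\<^sup>k k\<^sup>2\<^sup>n + O((k - 2)\<^sup>2\<^sup>n)\<close> for each of the \<open>k\<close> ends \<open>t\<close>.\<close>

section \<open>Multigraphs with labelled edges\<close>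

definition toggle :: "'v \<Rightarrow> 'v set \<Rightarrow> 'v set" where
  "toggle x A = (if x \<in> A then A - {x} else insert x A)"

lemma mem_toggle: "y \<in> toggle x A \<longleftrightarrow> (y \<in> A) \<noteq> (y = x)"
  by (auto simp: toggle_def)

lemma toggle_toggle [simp]: "toggle x (toggle x A) = A"
  by (auto simp: toggle_def)

lemma toggle_commute: "toggle x (toggle y A) = toggle y (toggle x A)"
  by (auto simp: toggle_def)

lemma finite_toggle [simp]: "finite (toggle x A) = finite A"
  by (auto simp: toggle_def)

lemma toggle_subset: "x \<in> B \<Longrightarrow> A \<subseteq> B \<Longrightarrow> toggle x A \<subseteq> B"
  by (auto simp: toggle_def)

lemma even_card_toggle_toggle: "finite A \<Longrightarrow> even (card (toggle x (toggle y A))) = even (card A)"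
  by (auto simp: toggle_def card_insert_if)

lemma toggle_singleton_eq_empty_iff: "toggle s {t} = {} \<longleftrightarrow> s = t"
  by (auto simp: toggle_def)

lemma toggle_singleton: "toggle s {t} = (if s = t then {} else {s, t})"
  by (auto simp: toggle_def)


text \<open>A multigraph is a map \<open>e\<close> from edge labels to ordered pairs of endpoints, together with
  a set \<open>I\<close> of labels in use; a loop contributes 2 to the degree of its vertex.\<close>

definition degree :: "(nat \<Rightarrow> 'v \<times> 'v) \<Rightarrow> nat set \<Rightarrow> 'v \<Rightarrow> nat" where
  "degree e I x = card {i \<in> I. fst (e i) = x} + card {i \<in> I. snd (e i) = x}"

definition odd_vertices :: "(nat \<Rightarrow> 'v \<times> 'v) \<Rightarrow> nat set \<Rightarrow> 'v set" where
  "odd_vertices e I = {x. odd (degree e I x)}"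

lemma degree_insert:
  assumes "finite I" "i \<notin> I"
  shows "degree e (insert i I) x
    = degree e I x + (if fst (e i) = x then 1 else 0) + (if snd (e i) = x then 1 else 0)"
proof -
  have "{j \<in> insert i I. fst (e j) = x}
      = (if fst (e i) = x then insert i {j \<in> I. fst (e j) = x} else {j \<in> I. fst (e j) = x})"
       "{j \<in> insert i I. snd (e j) = x}
      = (if snd (e i) = x then insert i {j \<in> I. snd (e j) = x} else {j \<in> I. snd (e j) = x})"
    by auto
  then show ?thesis
    unfolding degree_def using assms by auto
qed

lemma degree_Un:
  assumes "finite C" "finite D" "C \<inter> D = {}"
  shows "degree e (C \<union> D) x = degree e C x + degree e D x"
proof -
  have "{i \<in> C \<union> D. fst (e i) = x} = {i \<in> C. fst (e i) = x} \<union> {i \<in> D. fst (e i) = x}"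
       "{i \<in> C \<union> D. snd (e i) = x} = {i \<in> C. snd (e i) = x} \<union> {i \<in> D. snd (e i) = x}"
    by auto
  then show ?thesis
    unfolding degree_def using assms by (simp add: card_Un_disjoint disjoint_iff)
qed

lemma degree_eq_0: "(\<And>i. i \<in> I \<Longrightarrow> fst (e i) \<noteq> x \<and> snd (e i) \<noteq> x) \<Longrightarrow> degree e I x = 0"
proof -
  assume "\<And>i. i \<in> I \<Longrightarrow> fst (e i) \<noteq> x \<and> snd (e i) \<noteq> x"
  then have "{i \<in> I. fst (e i) = x} = {}" and "{i \<in> I. snd (e i) = x} = {}"
    by auto
  then show ?thesis
    unfolding degree_def by (simp only: card.empty add_0)
qed

lemma odd_vertices_empty [simp]: "odd_vertices e {} = {}"
  by (simp add: odd_vertices_def degree_def)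

lemma odd_vertices_insert:
  "finite I \<Longrightarrow> i \<notin> I \<Longrightarrow>
    odd_vertices e (insert i I) = toggle (fst (e i)) (toggle (snd (e i)) (odd_vertices e I))"
  unfolding odd_vertices_def by (auto simp: mem_toggle degree_insert)

lemma odd_vertices_cong: "(\<And>i. i \<in> I \<Longrightarrow> e i = e' i) \<Longrightarrow> odd_vertices e I = odd_vertices e' I"
proof -
  assume "\<And>i. i \<in> I \<Longrightarrow> e i = e' i"
  then have "{i \<in> I. fst (e i) = x} = {i \<in> I. fst (e' i) = x}"
    "{i \<in> I. snd (e i) = x} = {i \<in> I. snd (e' i) = x}" for x
    by auto
  then show ?thesis
    unfolding odd_vertices_def degree_def by simp
qed

lemma finite_odd_vertices: "finite I \<Longrightarrow> finite (odd_vertices e I)"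
  by (induction I rule: finite_induct) (simp_all add: odd_vertices_insert)

lemma even_card_odd_vertices: "finite I \<Longrightarrow> even (card (odd_vertices e I))"
  by (induction I rule: finite_induct)
    (simp_all add: odd_vertices_insert even_card_toggle_toggle finite_odd_vertices)

lemma odd_vertices_separated:
  assumes "finite C" "finite D" "C \<inter> D = {}"
    and "\<And>i. i \<in> C \<Longrightarrow> fst (e i) \<in> S \<and> snd (e i) \<in> S"
    and "\<And>i. i \<in> D \<Longrightarrow> fst (e i) \<notin> S \<and> snd (e i) \<notin> S"
  shows "odd_vertices e C = odd_vertices e (C \<union> D) \<inter> S"
    and "odd_vertices e D = odd_vertices e (C \<union> D) - S"
proof -
  have "degree e D x = 0" if "x \<in> S" for x
    using assms(5) that by (intro degree_eq_0) auto
  moreover have "degree e C x = 0" if "x \<notin> S" for x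
    using assms(4) that by (intro degree_eq_0) auto
  ultimately have "degree e (C \<union> D) x = (if x \<in> S then degree e C x else degree e D x)" for x
    by (simp add: degree_Un[OF assms(1-3)])
  then show "odd_vertices e C = odd_vertices e (C \<union> D) \<inter> S"
    and "odd_vertices e D = odd_vertices e (C \<union> D) - S"
    unfolding odd_vertices_def using \<open>\<And>x. x \<notin> S \<Longrightarrow> degree e C x = 0\<close>
      \<open>\<And>x. x \<in> S \<Longrightarrow> degree e D x = 0\<close> by (auto, metis odd_pos less_numeral_extra(3))
qed


inductive_set component :: "(nat \<Rightarrow> 'v \<times> 'v) \<Rightarrow> nat set \<Rightarrow> 'v \<Rightarrow> 'v set"
  for e I u where
  component_start: "u \<in> component e I u"
| component_fwd: "i \<in> I \<Longrightarrow> fst (e i) \<in> component e I u \<Longrightarrow> snd (e i) \<in> component e I u"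
| component_bwd: "i \<in> I \<Longrightarrow> snd (e i) \<in> component e I u \<Longrightarrow> fst (e i) \<in> component e I u"

lemma component_edge_iff: "i \<in> I \<Longrightarrow> fst (e i) \<in> component e I u \<longleftrightarrow> snd (e i) \<in> component e I u"
  by (meson component_fwd component_bwd)

lemma component_minimal:
  assumes "u \<in> S" "\<And>i. i \<in> I \<Longrightarrow> fst (e i) \<in> S \<longleftrightarrow> snd (e i) \<in> S"
  shows "component e I u \<subseteq> S"
proof
  fix x assume "x \<in> component e I u"
  then show "x \<in> S"
    by induction (use assms in auto)
qed

lemma component_mono:
  assumes "I \<subseteq> J"
  shows "component e I u \<subseteq> component e J u"
proof
  fix x assume "x \<in> component e I u"
  then show "x \<in> component e J u"
    by induction (use assms in \<open>auto intro: component.intros\<close>)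
qed

definition connected_from :: "(nat \<Rightarrow> 'v \<times> 'v) \<Rightarrow> nat set \<Rightarrow> 'v \<Rightarrow> bool" where
  "connected_from e I s \<longleftrightarrow> (\<forall>i\<in>I. fst (e i) \<in> component e I s)"

lemma connected_from_remove_loop:
  assumes "connected_from e I s" "e i = (s, s)"
  shows "connected_from e (I - {i}) s"
proof -
  have "component e I s \<subseteq> component e (I - {i}) s"
  proof (rule component_minimal)
    fix j assume "j \<in> I"
    then show "fst (e j) \<in> component e (I - {i}) s \<longleftrightarrow> snd (e j) \<in> component e (I - {i}) s"
      using assms(2) component_edge_iff[of j "I - {i}" e s] by (cases "j = i") auto
  qed (rule component_start)
  then show ?thesis
    using assms(1) unfolding connected_from_def by auto
qed

lemma connected_from_nonloop_edge:
  assumes "connected_from e I s" "I \<noteq> {}" "\<forall>i\<in>I. e i \<noteq> (s, s)"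
  obtains i where "i \<in> I" "(fst (e i) = s) \<noteq> (snd (e i) = s)"
proof -
  obtain j where j: "j \<in> I"
    using assms(2) by auto
  have "component e I s \<subseteq> {s}" if "\<forall>i\<in>I. (fst (e i) = s) = (snd (e i) = s)"
    by (rule component_minimal) (use that in auto)
  moreover have "fst (e j) \<in> component e I s"
    using assms(1) j unfolding connected_from_def by blast
  ultimately show ?thesis
    using that assms(3) j component_edge_iff[OF j, of e s]
    by (metis prod.collapse singletonD subsetD)
qed

lemma connected_from_component: "connected_from e {j \<in> I. fst (e j) \<in> component e I u} u"
proof -
  let ?C = "{j \<in> I. fst (e j) \<in> component e I u}"
  have "component e ?C u \<subseteq> component e I u"
    by (rule component_mono) auto
  moreover have "component e I u \<subseteq> component e ?C u"
  proof (rule component_minimal)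
    fix j assume j: "j \<in> I"
    show "fst (e j) \<in> component e ?C u \<longleftrightarrow> snd (e j) \<in> component e ?C u"
    proof (cases "j \<in> ?C")
      case True
      then show ?thesis by (rule component_edge_iff)
    next
      case False
      then show ?thesis
        using j component_edge_iff[OF j, of e u] \<open>component e ?C u \<subseteq> component e I u\<close> by auto
    qed
  qed (rule component_start)
  ultimately show ?thesis
    unfolding connected_from_def by auto
qed

lemma connected_from_remove_edge:
  assumes conn: "connected_from e I s" and i: "i \<in> I" "{fst (e i), snd (e i)} = {s, u}"
  defines "S \<equiv> component e (I - {i}) u"
  shows "connected_from e {j \<in> I - {i}. fst (e j) \<notin> S} s"
    and "s \<in> S \<Longrightarrow> {j \<in> I - {i}. fst (e j) \<notin> S} = {}"
proof -
  let ?D = "{j \<in> I - {i}. fst (e j) \<notin> S}"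
  have S_edge: "fst (e j) \<in> S \<longleftrightarrow> snd (e j) \<in> S" if "j \<in> I - {i}" for j
    using component_edge_iff[OF that] unfolding S_def .
  have "component e I s \<subseteq> component e ?D s \<union> S"
  proof (rule component_minimal)
    fix j assume j: "j \<in> I"
    show "fst (e j) \<in> component e ?D s \<union> S \<longleftrightarrow> snd (e j) \<in> component e ?D s \<union> S"
    proof (cases "j = i")
      case True
      then show ?thesis
        using i(2) component_start[of u e "I - {i}"] component_start[of s e ?D]
        unfolding S_def by (auto simp: doubleton_eq_iff)
    next
      case False
      then show ?thesis
        using j S_edge[of j] component_edge_iff[of j ?D e s] by auto
    qed
  qed (simp add: component_start)
  then have D_fst: "fst (e j) \<in> component e ?D s" if "j \<in> ?D" for j
    using conn that unfolding connected_from_def by auto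
  then show "connected_from e ?D s"
    unfolding connected_from_def by blast
  assume "s \<in> S"
  have "component e ?D s \<subseteq> S"
    by (rule component_minimal) (use \<open>s \<in> S\<close> S_edge in auto)
  then show "?D = {}"
    using D_fst by auto
qed


text \<open>A step \<open>(i, b)\<close> traverses edge \<open>i\<close>, backwards if \<open>b\<close>.\<close>

fun trail_end :: "(nat \<Rightarrow> 'v \<times> 'v) \<Rightarrow> 'v \<Rightarrow> (nat \<times> bool) list \<Rightarrow> 'v option" where
  "trail_end e p [] = Some p"
| "trail_end e p ((i, b) # ws) =
    (if (if b then snd (e i) else fst (e i)) = p
     then trail_end e (if b then fst (e i) else snd (e i)) ws else None)"

lemma trail_end_append:
  "trail_end e p (xs @ ys) = (case trail_end e p xs of None \<Rightarrow> None | Some q \<Rightarrow> trail_end e q ys)"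
  by (induction e p xs rule: trail_end.induct) auto

definition euler_trail :: "(nat \<Rightarrow> 'v \<times> 'v) \<Rightarrow> nat set \<Rightarrow> 'v \<Rightarrow> 'v \<Rightarrow> (nat \<times> bool) list \<Rightarrow> bool"
  where "euler_trail e I s t ws \<longleftrightarrow>
    distinct (map fst ws) \<and> set (map fst ws) = I \<and> trail_end e s ws = Some t"

lemma euler_trail_Cons:
  assumes "euler_trail e I u t ws" "i \<notin> I"
    and "(if b then snd (e i) else fst (e i)) = s" "(if b then fst (e i) else snd (e i)) = u"
  shows "euler_trail e (insert i I) s t ((i, b) # ws)"
  using assms unfolding euler_trail_def by auto

lemma euler_trail_append:
  assumes "euler_trail e I s u xs" "euler_trail e J u t ys" "I \<inter> J = {}"
  shows "euler_trail e (I \<union> J) s t (xs @ ys)"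
  using assms unfolding euler_trail_def by (auto simp: trail_end_append)

text \<open>Parity forces the end \<open>t\<close> into the component of the start \<open>u\<close>.\<close>

lemma odd_vertices_component_split:
  assumes fin: "finite I" and odd: "odd_vertices e I = toggle u {t}"
  defines "S \<equiv> component e I u"
  shows "t \<in> S"
    and "odd_vertices e {j \<in> I. fst (e j) \<in> S} = toggle u {t}"
    and "odd_vertices e {j \<in> I. fst (e j) \<notin> S} = {}"
proof -
  let ?C = "{j \<in> I. fst (e j) \<in> S}" and ?D = "{j \<in> I. fst (e j) \<notin> S}"
  have CD: "I = ?C \<union> ?D" "?C \<inter> ?D = {}" "finite ?C" "finite ?D"
    using fin by auto
  have C_in: "fst (e j) \<in> S \<and> snd (e j) \<in> S" if "j \<in> ?C" for j
    using that component_edge_iff[of j I e u] by (auto simp: S_def)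
  have D_out: "fst (e j) \<notin> S \<and> snd (e j) \<notin> S" if "j \<in> ?D" for j
    using that component_edge_iff[of j I e u] by (auto simp: S_def)
  have sep: "odd_vertices e ?C = toggle u {t} \<inter> S" "odd_vertices e ?D = toggle u {t} - S"
    using odd_vertices_separated[OF CD(3,4,2), of e S, OF C_in D_out] by (simp_all flip: CD(1) add: odd)
  have "u \<in> S"
    by (simp add: S_def component_start)
  show "t \<in> S"
  proof (rule ccontr)
    assume "t \<notin> S"
    then have "odd_vertices e ?C = {u}"
      using sep(1) \<open>u \<in> S\<close> by (auto simp: toggle_singleton)
    then show False
      using even_card_odd_vertices[OF CD(3), of e] by simp
  qed
  with \<open>u \<in> S\<close> have "toggle u {t} \<subseteq> S"
    by (simp add: toggle_singleton)
  then show "odd_vertices e ?C = toggle u {t}" "odd_vertices e ?D = {}"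
    using sep by (simp_all add: Int_absorb2 Diff_eq_empty_iff)
qed

text \<open>The inductive step for a start \<open>s\<close> without loops: leave \<open>s\<close> along a non-loop edge \<open>i\<close> to \<open>u\<close>;
  an Euler circuit at \<open>s\<close> through the edges outside the component of \<open>u\<close>, followed by \<open>i\<close> and
  an Euler trail from \<open>u\<close> to \<open>t\<close> through that component, covers everything.\<close>

lemma euler_trail_nonloop_step:
  assumes IH: "\<And>J u t. J \<subset> I \<Longrightarrow> odd_vertices e J = toggle u {t} \<Longrightarrow> connected_from e J u
      \<Longrightarrow> \<exists>ws. euler_trail e J u t ws"
    and fin: "finite I" and odd: "odd_vertices e I = toggle s {t}" and conn: "connected_from e I s"
    and i: "i \<in> I" "(fst (e i) = s) \<noteq> (snd (e i) = s)"
  shows "\<exists>ws. euler_trail e I s t ws"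
proof -
  define b where "b = (snd (e i) = s)"
  define u where "u = (if b then fst (e i) else snd (e i))"
  have ends: "(if b then snd (e i) else fst (e i)) = s" "{fst (e i), snd (e i)} = {s, u}"
    using i(2) by (auto simp: b_def u_def)
  define I' where "I' = I - {i}"
  have I': "I = insert i I'" "i \<notin> I'" "finite I'"
    using i fin by (auto simp: I'_def)
  have "toggle (fst (e i)) (toggle (snd (e i)) X) = toggle s (toggle u X)" for X
    using i(2) by (cases b) (auto simp: b_def u_def toggle_commute)
  then have "toggle s {t} = toggle s (toggle u (odd_vertices e I'))"
    using odd odd_vertices_insert[OF I'(3,2), of e] unfolding I'(1) by simp
  then have odd': "odd_vertices e I' = toggle u {t}"
    by (metis toggle_toggle)
  define S where "S = component e I' u"
  define C where "C = {j \<in> I'. fst (e j) \<in> S}"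
  define D where "D = {j \<in> I'. fst (e j) \<notin> S}"
  have CD: "I = insert i C \<union> D" "i \<notin> C" "D \<inter> insert i C = {}" "C \<subset> I" "D \<subset> I"
    using I' by (auto simp: C_def D_def)
  have odd_C: "odd_vertices e C = toggle u {t}" and odd_D: "odd_vertices e D = toggle s {s}"
    using odd_vertices_component_split[OF I'(3) odd'] by (simp_all add: C_def D_def S_def toggle_singleton)
  obtain ws2 where ws2: "euler_trail e C u t ws2"
    using IH[OF CD(4) odd_C] connected_from_component[of e I' u] by (auto simp: C_def S_def)
  have trail_i: "euler_trail e (insert i C) s t ((i, b) # ws2)"
    by (rule euler_trail_Cons[OF ws2 CD(2) ends(1)]) (simp add: u_def)
  show ?thesis
  proof (cases "s \<in> S")
    case True
    then have "D = {}"
      using connected_from_remove_edge(2)[OF conn i(1) ends(2)] by (simp add: D_def I'_def S_def)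
    then show ?thesis
      using trail_i CD(1) by auto
  next
    case False
    have "connected_from e D s"
      using connected_from_remove_edge(1)[OF conn i(1) ends(2)] by (simp add: D_def I'_def S_def)
    then obtain ws1 where "euler_trail e D s s ws1"
      using IH[OF CD(5) odd_D] by blast
    from euler_trail_append[OF this trail_i CD(3)] show ?thesis
      unfolding CD(1) Un_commute[of "insert i C"] by blast
  qed
qed


theorem euler_trail_exists:
  assumes "finite I" "odd_vertices e I = toggle s {t}" "connected_from e I s"
  shows "\<exists>ws. euler_trail e I s t ws"
  using assms
proof (induction I arbitrary: s t rule: finite_psubset_induct)
  case (psubset I)
  consider "I = {}" | i where "i \<in> I" "e i = (s, s)" | "I \<noteq> {}" "\<forall>i\<in>I. e i \<noteq> (s, s)"
    by blast
  then show ?case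
  proof cases
    case 1
    then show ?thesis
      using psubset.prems(1) toggle_singleton_eq_empty_iff by (force simp: euler_trail_def)
  next
    case (2 i)
    have "odd_vertices e (I - {i}) = toggle s {t}"
      using psubset.prems(1) odd_vertices_insert[of "I - {i}" i e] 2 psubset.hyps(1)
      by (simp add: insert_absorb)
    then obtain ws where "euler_trail e (I - {i}) s t ws"
      using psubset.IH[of "I - {i}"] connected_from_remove_loop[OF psubset.prems(2) 2(2)] 2(1)
      by blast
    then show ?thesis
      using euler_trail_Cons[of e "I - {i}" s t ws i False s] 2 by (auto simp: insert_absorb)
  next
    case 3
    then obtain i where "i \<in> I" "(fst (e i) = s) \<noteq> (snd (e i) = s)"
      using connected_from_nonloop_edge[OF psubset.prems(2)] by blast
    then show ?thesis
      using euler_trail_nonloop_step[OF psubset.IH psubset.hyps psubset.prems] by blast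
  qed
qed


section \<open>Counting edge sequences by their odd vertices\<close>

definition edge_seqs :: "'v set \<Rightarrow> nat \<Rightarrow> (nat \<Rightarrow> 'v \<times> 'v) set" where
  "edge_seqs V n = (\<Pi>\<^sub>E i\<in>{1..n}. V \<times> V)"

definition odd_count :: "'v set \<Rightarrow> nat \<Rightarrow> 'v set \<Rightarrow> nat" where
  "odd_count V n U = card {e \<in> edge_seqs V n. odd_vertices e {1..n} = U}"

lemma finite_edge_seqs: "finite V \<Longrightarrow> finite (edge_seqs V n)"
  unfolding edge_seqs_def by (intro finite_PiE) auto

lemma odd_count_0: "odd_count V 0 U = (if U = {} then 1 else 0)"
  by (simp add: odd_count_def edge_seqs_def)

lemma odd_count_Suc:
  assumes "finite V"
  shows "odd_count V (Suc n) U = (\<Sum>a\<in>V. \<Sum>b\<in>V. odd_count V n (toggle b (toggle a U)))"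
proof -
  let ?extend = "\<lambda>(y, e). e(Suc n := y)"
  let ?E = "\<lambda>y. {e \<in> edge_seqs V n. odd_vertices e {1..n} = toggle (snd y) (toggle (fst y) U)}"
  define P where "P e \<longleftrightarrow> odd_vertices e {1..Suc n} = U" for e
  have interval: "{1..Suc n} = insert (Suc n) {1..n}" "Suc n \<notin> {1..n}"
    by auto
  have P_extend: "P (e(Suc n := y)) \<longleftrightarrow> odd_vertices e {1..n} = toggle (snd y) (toggle (fst y) U)"
    for e y
  proof -
    have "odd_vertices (e(Suc n := y)) {1..n} = odd_vertices e {1..n}"
      by (rule odd_vertices_cong) auto
    then have "odd_vertices (e(Suc n := y)) {1..Suc n}
        = toggle (fst y) (toggle (snd y) (odd_vertices e {1..n}))"
      unfolding interval(1) by (simp add: odd_vertices_insert)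
    then show ?thesis
      unfolding P_def by (metis toggle_toggle)
  qed
  have "edge_seqs V (Suc n) = ?extend ` ((V \<times> V) \<times> edge_seqs V n)"
    unfolding edge_seqs_def interval(1) PiE_insert_eq ..
  then have "{e \<in> edge_seqs V (Suc n). P e} = ?extend ` Sigma (V \<times> V) ?E"
    unfolding Compr_image_eq by (auto simp: P_extend)
  moreover have "inj_on ?extend (Sigma (V \<times> V) ?E)"
    by (rule inj_on_subset[OF inj_combinator[OF interval(2)]]) (auto simp: edge_seqs_def)
  ultimately have "odd_count V (Suc n) U = card (Sigma (V \<times> V) ?E)"
    unfolding odd_count_def P_def by (simp add: card_image)
  also have "\<dots> = (\<Sum>y\<in>V \<times> V. card (?E y))"
    using assms finite_edge_seqs[OF assms] by simp
  finally show ?thesis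
    by (simp add: odd_count_def sum.cartesian_product case_prod_beta)
qed

definition character :: "'v set \<Rightarrow> 'v set \<Rightarrow> real" where
  "character S U = (\<Prod>x\<in>S. if x \<in> U then -1 else 1)"

lemma character_toggle:
  assumes "finite S"
  shows "character S (toggle a U) = (if a \<in> S then -1 else 1) * character S U"
proof (cases "a \<in> S")
  case True
  have "character S (toggle a U) = (if a \<in> toggle a U then -1 else 1) * (\<Prod>x\<in>S - {a}. if x \<in> U then -1 else 1)"
    unfolding character_def prod.remove[OF assms True] by (auto simp: mem_toggle intro!: prod.cong)
  moreover have "character S U = (if a \<in> U then -1 else 1) * (\<Prod>x\<in>S - {a}. if x \<in> U then -1 else 1)"
    unfolding character_def prod.remove[OF assms True] ..
  ultimately show ?thesis
    using True by (simp add: mem_toggle)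
next
  case False
  then show ?thesis
    unfolding character_def by (auto simp: mem_toggle intro!: prod.cong)
qed

lemma abs_character: "finite S \<Longrightarrow> \<bar>character S U\<bar> = 1"
  unfolding character_def by (induction S rule: finite_induct) (simp_all add: abs_mult)

lemma character_empty [simp]: "character {} U = 1"
  by (simp add: character_def)

lemma character_superset: "finite A \<Longrightarrow> U \<subseteq> A \<Longrightarrow> character A U = (-1) ^ card U"
  unfolding character_def prod.If_cases by (simp add: Int_absorb1 Int_commute)

lemma sum_character:
  assumes "finite A" "U \<subseteq> A"
  shows "(\<Sum>S\<in>Pow A. character S U) = (if U = {} then 2 ^ card A else 0)"
proof -
  have "(\<Sum>S\<in>Pow A. character S U) = (\<Prod>x\<in>A. (if x \<in> U then -1 else 1) + 1)"
    unfolding character_def prod_add[OF assms(1)] by simp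
  also have "\<dots> = (\<Prod>x\<in>A. if x \<in> U then 0 else 2)"
    by (intro prod.cong) auto
  also have "\<dots> = (if U = {} then 2 ^ card A else 0)"
    using assms by (auto simp: prod_zero_iff)
  finally show ?thesis .
qed

lemma sum_sign:
  assumes "finite A" "S \<subseteq> A"
  shows "(\<Sum>a\<in>A. if a \<in> S then -1 else 1 :: real) = real (card A) - 2 * real (card S)"
proof -
  have "(\<Sum>a\<in>A. if a \<in> S then -1 else 1 :: real) = (\<Sum>a\<in>A. 1 - (if a \<in> S then 2 else 0))"
    by (intro sum.cong) auto
  also have "\<dots> = real (card A) - 2 * real (card S)"
    using assms by (simp add: sum_subtractf sum.If_cases Int_absorb1)
  finally show ?thesis .
qed

text \<open>Discrete Fourier analysis on the group \<open>2\<^sup>V\<close>: adding an edge \<open>(a, b)\<close> multiplies the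
  character sum by \<open>(\<Sum>a. \<chi>\<^sub>S a) (\<Sum>b. \<chi>\<^sub>S b) = (|V| - 2|S|)\<^sup>2\<close>.\<close>

lemma odd_count_formula:
  assumes "finite V" "U \<subseteq> V"
  shows "2 ^ card V * real (odd_count V n U)
    = (\<Sum>S\<in>Pow V. character S U * (real (card V) - 2 * real (card S)) ^ (2 * n))"
  using assms(2)
proof (induction n arbitrary: U)
  case 0
  then show ?case
    using sum_character[OF assms(1) 0] by (simp add: odd_count_0)
next
  case (Suc n)
  let ?s = "\<lambda>S a. if a \<in> S then -1 else 1 :: real"
  let ?w = "\<lambda>S. character S U * (real (card V) - 2 * real (card S)) ^ (2 * n)"
  have "2 ^ card V * real (odd_count V (Suc n) U)
      = (\<Sum>a\<in>V. \<Sum>b\<in>V. 2 ^ card V * real (odd_count V n (toggle b (toggle a U))))"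
    by (simp add: odd_count_Suc[OF assms(1)] sum_distrib_left)
  also have "\<dots> = (\<Sum>a\<in>V. \<Sum>b\<in>V. \<Sum>S\<in>Pow V. ?w S * (?s S a * ?s S b))"
  proof (intro sum.cong refl)
    fix a b assume "a \<in> V" "b \<in> V"
    then have "toggle b (toggle a U) \<subseteq> V"
      using Suc.prems by (simp add: toggle_subset)
    then show "2 ^ card V * real (odd_count V n (toggle b (toggle a U)))
        = (\<Sum>S\<in>Pow V. ?w S * (?s S a * ?s S b))"
      unfolding Suc.IH[OF \<open>toggle b (toggle a U) \<subseteq> V\<close>]
      by (intro sum.cong refl) (simp add: character_toggle finite_subset[OF _ assms(1)] mult_ac)
  qed
  also have "\<dots> = (\<Sum>a\<in>V. \<Sum>S\<in>Pow V. \<Sum>b\<in>V. ?w S * (?s S a * ?s S b))"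
    by (intro sum.cong refl) (rule sum.swap)
  also have "\<dots> = (\<Sum>S\<in>Pow V. \<Sum>a\<in>V. \<Sum>b\<in>V. ?w S * (?s S a * ?s S b))"
    by (rule sum.swap)
  also have "\<dots> = (\<Sum>S\<in>Pow V. ?w S * ((\<Sum>a\<in>V. ?s S a) * (\<Sum>b\<in>V. ?s S b)))"
    unfolding sum_product by (simp add: sum_distrib_left)
  also have "\<dots> = (\<Sum>S\<in>Pow V. character S U * (real (card V) - 2 * real (card S)) ^ (2 * Suc n))"
    by (intro sum.cong refl) (simp add: sum_sign[OF assms(1)] power_mult power2_eq_square)
  finally show ?case .
qed

text \<open>Only \<open>S = {}\<close> and \<open>S = V\<close> contribute the maximal term \<open>|V|\<^sup>2\<^sup>n\<close> to the character sum.\<close>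

lemma odd_count_estimate:
  assumes V: "finite V" "V \<noteq> {}" and U: "U \<subseteq> V" "even (card U)"
  shows "\<bar>real (odd_count V n U) - 2 * real (card V) ^ (2 * n) / 2 ^ card V\<bar>
    \<le> (real (card V) - 2) ^ (2 * n)"
proof -
  let ?k = "real (card V)"
  let ?t = "\<lambda>S. character S U * (?k - 2 * real (card S)) ^ (2 * n)"
  define R where "R = Pow V - {{}, V}"
  have split: "Pow V = insert {} (insert V R)" "{} \<notin> insert V R" "V \<notin> R" "finite R"
    using V by (auto simp: R_def)
  have "?t V = ?k ^ (2 * n)"
    using character_superset[OF V(1) U(1)] U(2) by (simp add: power_mult)
  then have eq: "2 ^ card V * real (odd_count V n U) - 2 * ?k ^ (2 * n) = (\<Sum>S\<in>R. ?t S)"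
    unfolding odd_count_formula[OF V(1) U(1)] split(1) using split(2-4) by simp
  have "\<bar>\<Sum>S\<in>R. ?t S\<bar> \<le> (\<Sum>S\<in>R. \<bar>?t S\<bar>)"
    by (rule sum_abs)
  also have "\<dots> \<le> (\<Sum>S\<in>R. (?k - 2) ^ (2 * n))"
  proof (rule sum_mono)
    fix S assume "S \<in> R"
    then have S: "S \<subseteq> V" "S \<noteq> {}" "S \<noteq> V" "finite S"
      using V(1) by (auto simp: R_def finite_subset)
    then have "1 \<le> card S" "card S < card V"
      using V(1) by (auto simp: Suc_le_eq card_gt_0_iff psubset_card_mono)
    then have "\<bar>?k - 2 * real (card S)\<bar> \<le> ?k - 2"
      by linarith
    then show "\<bar>?t S\<bar> \<le> (?k - 2) ^ (2 * n)"
      by (simp add: abs_mult abs_character[OF S(4)] power_abs power_mono)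
  qed
  also have "\<dots> \<le> 2 ^ card V * (?k - 2) ^ (2 * n)"
    using card_mono[of "Pow V" R] V(1) by (auto simp: R_def card_Pow power_mult intro: mult_right_mono)
  finally have "\<bar>2 ^ card V * (real (odd_count V n U) - 2 * ?k ^ (2 * n) / 2 ^ card V)\<bar>
      \<le> 2 ^ card V * (?k - 2) ^ (2 * n)"
    by (simp add: eq[symmetric] right_diff_distrib)
  then show ?thesis
    by (simp add: abs_mult)
qed

definition euler_candidates :: "'v set \<Rightarrow> 'v \<Rightarrow> nat \<Rightarrow> ('v \<times> (nat \<Rightarrow> 'v \<times> 'v)) set" where
  "euler_candidates V v n =
    (SIGMA t:V. {e \<in> edge_seqs V n. odd_vertices e {1..n} = toggle v {t}})"

lemma card_euler_candidates_estimate: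
  assumes "finite V" "v \<in> V"
  shows "\<bar>real (card (euler_candidates V v n))
      - real (card V) / 2 ^ (card V - 1) * real (card V) ^ (2 * n)\<bar>
    \<le> real (card V) * (real (card V) - 2) ^ (2 * n)"
proof -
  let ?k = "real (card V)"
  let ?c = "2 * ?k ^ (2 * n) / 2 ^ card V"
  have "real (card (euler_candidates V v n)) = (\<Sum>t\<in>V. real (odd_count V n (toggle v {t})))"
    using assms(1) finite_edge_seqs[OF assms(1)] by (simp add: euler_candidates_def odd_count_def)
  moreover have "real (card V) / 2 ^ (card V - 1) * ?k ^ (2 * n) = (\<Sum>t\<in>V. ?c)"
    using assms by (cases "card V") (auto simp: card_gt_0_iff)
  ultimately have "real (card (euler_candidates V v n)) - real (card V) / 2 ^ (card V - 1) * ?k ^ (2 * n)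
      = (\<Sum>t\<in>V. real (odd_count V n (toggle v {t})) - ?c)"
    by (simp only: sum_subtractf)
  then have "\<bar>real (card (euler_candidates V v n)) - real (card V) / 2 ^ (card V - 1) * ?k ^ (2 * n)\<bar>
      \<le> (\<Sum>t\<in>V. \<bar>real (odd_count V n (toggle v {t})) - ?c\<bar>)"
    by (simp only: sum_abs)
  also have "\<dots> \<le> (\<Sum>t\<in>V. (?k - 2) ^ (2 * n))"
    using assms by (intro sum_mono odd_count_estimate) (auto simp: toggle_singleton)
  finally show ?thesis
    by simp
qed

definition has_star :: "'v set \<Rightarrow> 'v \<Rightarrow> nat \<Rightarrow> (nat \<Rightarrow> 'v \<times> 'v) \<Rightarrow> bool" where
  "has_star V v n e \<longleftrightarrow> (\<forall>y\<in>V. \<exists>i\<in>{1..n}. e i = (v, y))"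

lemma connected_from_star:
  assumes "e \<in> edge_seqs V n" "has_star V v n e"
  shows "connected_from e {1..n} v"
  unfolding connected_from_def
proof
  fix i assume "i \<in> {1..n}"
  then have "e i \<in> V \<times> V"
    using assms(1) unfolding edge_seqs_def by (rule PiE_mem[rotated])
  then have "fst (e i) \<in> V"
    by auto
  then obtain j where "j \<in> {1..n}" "e j = (v, fst (e i))"
    using assms(2) unfolding has_star_def by blast
  then show "fst (e i) \<in> component e {1..n} v"
    using component_fwd[of j "{1..n}" e v] component_start[of v e "{1..n}"] by simp
qed

lemma card_without_star:
  assumes "finite V" "v \<in> V"
  shows "card {e \<in> edge_seqs V n. \<not> has_star V v n e} \<le> card V * (card V ^ 2 - 1) ^ n"
proof -
  let ?avoid = "\<lambda>y. \<Pi>\<^sub>E i\<in>{1..n}. V \<times> V - {(v, y)}"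
  have "{e \<in> edge_seqs V n. \<not> has_star V v n e} \<subseteq> (\<Union>y\<in>V. ?avoid y)"
    by (force simp: edge_seqs_def has_star_def PiE_iff)
  then have "card {e \<in> edge_seqs V n. \<not> has_star V v n e} \<le> card (\<Union>y\<in>V. ?avoid y)"
    by (rule card_mono[rotated]) (use assms(1) in \<open>auto intro: finite_PiE\<close>)
  also have "\<dots> \<le> (\<Sum>y\<in>V. card (?avoid y))"
    by (rule card_UN_le[OF assms(1)])
  also have "\<dots> = card V * (card V ^ 2 - 1) ^ n"
    using assms by (simp add: card_PiE card_Diff_singleton card_cartesian_product power2_eq_square)
  finally show ?thesis .
qed



lemma asymp_equiv_geometric:
  fixes a :: "nat \<Rightarrow> real"
  assumes "C > 0" "0 \<le> q" "q < r" and err: "\<And>n. \<bar>a n - C * r ^ n\<bar> \<le> D * q ^ n"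
  shows "a \<sim>[at_top] (\<lambda>n. C * r ^ n)"
proof (rule asymp_equivI')
  have r: "r > 0"
    using assms(2,3) by linarith
  have lim: "(\<lambda>n. (q / r) ^ n) \<longlonglongrightarrow> 0"
    using assms(2,3) r by (intro LIMSEQ_power_zero) simp
  have bound: "norm (a n / (C * r ^ n) - 1) \<le> norm ((q / r) ^ n) * (D / C)" for n
  proof -
    have "\<bar>a n / (C * r ^ n) - 1\<bar> = \<bar>a n - C * r ^ n\<bar> / (C * r ^ n)"
      using assms(1) r by (simp add: field_simps)
    also have "\<dots> \<le> D * q ^ n / (C * r ^ n)"
      using assms(1) r err[of n] by (simp add: divide_right_mono)
    also have "\<dots> = norm ((q / r) ^ n) * (D / C)"
      using assms(2) r by (simp add: power_divide ac_simps)
    finally show ?thesis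
      by simp
  qed
  have "(\<lambda>n. a n / (C * r ^ n) - 1) \<longlonglongrightarrow> 0"
    by (rule tendsto_0_le[OF lim, where K = "D / C"]) (rule always_eventually, rule allI, rule bound)
  then show "((\<lambda>n. a n / (C * r ^ n)) \<longlongrightarrow> 1) at_top"
    by (rule LIM_zero_cancel)
qed

section \<open>Multilinear monomials evaluated along walks\<close>

lemma mlmon_indices: "w \<in> mlmon G n \<Longrightarrow> fst ` set w = {1..n}"
  unfolding mlmon_def by simp

lemma mlmon_distinct: "w \<in> mlmon G n \<Longrightarrow> distinct (map fst w)"
  unfolding mlmon_def by simp

lemma mlmon_gletter: "w \<in> mlmon G n \<Longrightarrow> l \<in> set w \<Longrightarrow> gletter G l"
  unfolding mlmon_def gletter_def by force

lemma finite_mlmon: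
  assumes "finite (carrier G)"
  shows "finite (mlmon G n)"
proof -
  have "length w = n" if "w \<in> mlmon G n" for w
    using that distinct_card[OF mlmon_distinct[OF that]] unfolding mlmon_def by simp
  then have "mlmon G n \<subseteq> {w. set w \<subseteq> {1..n} \<times> carrier G \<times> UNIV \<and> length w = n}"
    unfolding mlmon_def by force
  moreover have "finite {w. set w \<subseteq> {1..n} \<times> carrier G \<times> (UNIV :: bool set) \<and> length w = n}"
    using assms by (intro finite_lists_length_eq) auto
  ultimately show ?thesis
    by (rule finite_subset)
qed

text \<open>A monomial is read as a walk in the complete graph on \<open>G\<close>: the letter \<open>x\<^sub>i\<^sub>,\<^sub>g\<close> moves from \<open>p\<close>
  to \<open>p g\<close> along the edge \<open>(p, p g)\<close>, while \<open>x\<^sup>*\<^sub>i\<^sub>,\<^sub>g\<close> moves from \<open>p\<close> to \<open>p g\<^sup>-\<^sup>1\<close> along the edge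
  \<open>(p g\<^sup>-\<^sup>1, p)\<close> backwards; the edge is recorded under the label \<open>i\<close>. Since \<open>g\<close> is determined by the
  edge \<open>(c, c g)\<close>, so is the matrix entry \<open>edge_entry\<close> that the letter contributes. Unused labels
  are mapped to \<open>undefined\<close>, as in the extensional functions of \<open>edge_seqs\<close>.\<close>

fun walk_end :: "('a, 'b) monoid_scheme \<Rightarrow> 'a \<Rightarrow> 'a word \<Rightarrow> 'a" where
  "walk_end G p [] = p"
| "walk_end G p ((i, g, s) # w) = walk_end G (if s then p \<otimes>\<^bsub>G\<^esub> inv\<^bsub>G\<^esub> g else p \<otimes>\<^bsub>G\<^esub> g) w"

fun walk_edges :: "('a, 'b) monoid_scheme \<Rightarrow> 'a \<Rightarrow> 'a word \<Rightarrow> nat \<Rightarrow> 'a \<times> 'a" where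
  "walk_edges G p [] = (\<lambda>_. undefined)"
| "walk_edges G p ((i, g, s) # w) =
    (let q = if s then p \<otimes>\<^bsub>G\<^esub> inv\<^bsub>G\<^esub> g else p \<otimes>\<^bsub>G\<^esub> g
     in (walk_edges G q w)(i := if s then (q, p) else (p, q)))"

definition edge_entry :: "('a, 'b) monoid_scheme \<Rightarrow> (nat \<Rightarrow> 'a \<Rightarrow> 'a mat) \<Rightarrow> nat \<Rightarrow> 'a \<times> 'a \<Rightarrow> complex"
  where "edge_entry G A i e = A i (inv\<^bsub>G\<^esub> fst e \<otimes>\<^bsub>G\<^esub> snd e) (fst e) (snd e)"

lemma walk_edges_undefined: "i \<notin> fst ` set w \<Longrightarrow> walk_edges G p w i = undefined"
  by (induction G p w rule: walk_edges.induct) (auto simp: Let_def)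

lemma graded_comp_eq_0: "X \<in> graded_comp G g \<Longrightarrow> b \<noteq> a \<otimes>\<^bsub>G\<^esub> g \<Longrightarrow> X a b = 0"
  unfolding graded_comp_def by auto

context group
begin

lemma walk_end_closed:
  "p \<in> carrier G \<Longrightarrow> \<forall>l\<in>set w. fst (snd l) \<in> carrier G \<Longrightarrow> walk_end G p w \<in> carrier G"
proof (induction w arbitrary: p)
  case (Cons l w)
  then show ?case by (cases l) auto
qed simp

lemma walk_edges_closed:
  "p \<in> carrier G \<Longrightarrow> \<forall>l\<in>set w. fst (snd l) \<in> carrier G \<Longrightarrow> i \<in> fst ` set w \<Longrightarrow>
    walk_edges G p w i \<in> carrier G \<times> carrier G"
proof (induction w arbitrary: p)
  case (Cons l w)
  obtain j g s where l: "l = (j, g, s)"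
    by (cases l)
  then have q: "(if s then p \<otimes> inv g else p \<otimes> g) \<in> carrier G"
    using Cons.prems by auto
  show ?case
  proof (cases "i = j")
    case True
    then show ?thesis
      using Cons.prems l q by (auto simp: Let_def)
  next
    case False
    then have "i \<in> fst ` set w"
      using Cons.prems(3) l by auto
    then show ?thesis
      using Cons.IH[OF q] Cons.prems(2) False by (simp add: l Let_def)
  qed
qed simp

lemma walk_translate:
  assumes "a \<in> carrier G" "p \<in> carrier G" "\<forall>l\<in>set w. fst (snd l) \<in> carrier G"
  shows "walk_end G (a \<otimes> p) w = a \<otimes> walk_end G p w
    \<and> (\<forall>j\<in>fst ` set w. walk_edges G (a \<otimes> p) w j
          = (a \<otimes> fst (walk_edges G p w j), a \<otimes> snd (walk_edges G p w j)))"
  using assms(2,3)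
proof (induction w arbitrary: p)
  case (Cons l w)
  obtain i g s where l: "l = (i, g, s)"
    by (cases l)
  let ?q = "if s then p \<otimes> inv g else p \<otimes> g"
  have "g \<in> carrier G" "?q \<in> carrier G"
    using Cons.prems l by auto
  moreover have "(if s then a \<otimes> p \<otimes> inv g else a \<otimes> p \<otimes> g) = a \<otimes> ?q"
    using assms(1) \<open>g \<in> carrier G\<close> Cons.prems by (simp add: m_assoc)
  ultimately show ?case
    using Cons.IH[of ?q] Cons.prems by (auto simp: l Let_def)
qed simp

lemma eval_letter_eq:
  assumes A: "graded_subst G A" and l: "gletter G (i, g, s)" and ac: "a \<in> carrier G" "c \<in> carrier G"
  shows "eval_letter A (i, g, s) a c = (if c = (if s then a \<otimes> inv g else a \<otimes> g)
    then edge_entry G A i (if s then (c, a) else (a, c)) else 0)"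
proof -
  have g: "g \<in> carrier G" and Ai: "A i g \<in> graded_comp G g"
    using A l unfolding gletter_def graded_subst_def by auto
  have zero: "A i g x y = 0" if "y \<noteq> x \<otimes> g" for x y
    using graded_comp_eq_0[OF Ai that] .
  show ?thesis
  proof (cases s)
    case True
    have "a = c \<otimes> g \<longleftrightarrow> c = a \<otimes> inv g"
      using ac g by (metis inv_solve_right)
    moreover have "c = a \<otimes> inv g \<Longrightarrow> inv c \<otimes> a = g"
      using ac g by (simp add: inv_mult_group m_assoc)
    ultimately show ?thesis
      using True zero[where x = c and y = a] by (auto simp: eval_letter_def gmat_transpose_def edge_entry_def)
  next
    case False
    have "c = a \<otimes> g \<Longrightarrow> inv a \<otimes> c = g"
      using ac g by (simp add: m_assoc[symmetric])
    then show ?thesis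
      using False zero[where x = a and y = c] by (auto simp: eval_letter_def edge_entry_def)
  qed
qed

lemma eval_word_walk:
  assumes fin: "finite (carrier G)" and A: "graded_subst G A"
  shows "a \<in> carrier G \<Longrightarrow> \<forall>l\<in>set w. gletter G l \<Longrightarrow> distinct (map fst w) \<Longrightarrow>
    eval_word G A w a b = (if b = walk_end G a w
      then \<Prod>j\<in>fst ` set w. edge_entry G A j (walk_edges G a w j) else 0)"
proof (induction w arbitrary: a)
  case Nil
  then show ?case
    by (simp add: eval_word_def gmat_one_def)
next
  case (Cons l w)
  obtain i g s where l: "l = (i, g, s)"
    by (cases l)
  define q where "q = (if s then a \<otimes> inv g else a \<otimes> g)"
  define e where "e = (if s then (q, a) else (a, q))"
  have gl: "gletter G (i, g, s)" and i: "i \<notin> fst ` set w"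
    using Cons.prems l by auto
  then have q: "q \<in> carrier G"
    using Cons.prems(1) by (auto simp: q_def gletter_def)
  have "eval_word G A (l # w) a b = (\<Sum>c\<in>carrier G. eval_letter A l a c * eval_word G A w c b)"
    by (simp add: eval_word_def gmat_mult_def)
  also have "\<dots> = (\<Sum>c\<in>carrier G. if c = q then edge_entry G A i e * eval_word G A w q b else 0)"
    using eval_letter_eq[OF A gl Cons.prems(1)] by (intro sum.cong) (auto simp: l q_def e_def)
  also have "\<dots> = edge_entry G A i e * eval_word G A w q b"
    using fin q by simp
  also have "\<dots> = (if b = walk_end G q w then edge_entry G A i e
      * (\<Prod>j\<in>fst ` set w. edge_entry G A j (walk_edges G q w j)) else 0)"
    using Cons.IH[OF q] Cons.prems by auto
  also have "\<dots> = (if b = walk_end G a (l # w)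
      then \<Prod>j\<in>fst ` set (l # w). edge_entry G A j (walk_edges G a (l # w) j) else 0)"
  proof -
    have walk: "walk_end G a (l # w) = walk_end G q w"
      "walk_edges G a (l # w) = (walk_edges G q w)(i := e)"
      by (simp_all add: l q_def e_def Let_def)
    have "(\<Prod>j\<in>fst ` set w. edge_entry G A j (((walk_edges G q w)(i := e)) j))
        = (\<Prod>j\<in>fst ` set w. edge_entry G A j (walk_edges G q w j))"
      using i by (intro prod.cong) auto
    then show ?thesis
      unfolding walk using i by (simp add: l)
  qed
  finally show ?case .
qed

end

lemma prod_indicator_eq_PiE:
  assumes "finite S" "f \<in> Pi\<^sub>E S T" "g \<in> Pi\<^sub>E S T"
  shows "(\<Prod>j\<in>S. if f j = g j then 1 else 0) = (if f = g then 1 else (0 :: 'c :: comm_semiring_1))"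
proof (cases "f = g")
  case False
  then obtain j where "j \<in> S" "f j \<noteq> g j"
    using PiE_ext[OF assms(2,3)] by blast
  then have "(\<Prod>j\<in>S. if f j = g j then 1 else 0) = (0 :: 'c)"
    by (intro prod_zero[OF assms(1)]) auto
  with False show ?thesis
    by simp
qed simp

definition signature :: "('a, 'b) monoid_scheme \<Rightarrow> 'a word \<Rightarrow> 'a \<times> (nat \<Rightarrow> 'a \<times> 'a)" where
  "signature G w = (walk_end G \<one>\<^bsub>G\<^esub> w, walk_edges G \<one>\<^bsub>G\<^esub> w)"

definition signatures :: "('a, 'b) monoid_scheme \<Rightarrow> nat \<Rightarrow> ('a \<times> (nat \<Rightarrow> 'a \<times> 'a)) set" where
  "signatures G n = signature G ` mlmon G n"

definition signature_matrix ::
    "('a, 'b) monoid_scheme \<Rightarrow> (nat \<Rightarrow> 'a \<Rightarrow> 'a mat) \<Rightarrow> nat \<Rightarrow> 'a \<times> (nat \<Rightarrow> 'a \<times> 'a) \<Rightarrow> 'a mat"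
  where "signature_matrix G A n s a b = (if b = a \<otimes>\<^bsub>G\<^esub> fst s
    then \<Prod>j\<in>{1..n}. edge_entry G A j (a \<otimes>\<^bsub>G\<^esub> fst (snd s j), a \<otimes>\<^bsub>G\<^esub> snd (snd s j)) else 0)"

definition fibre_sum :: "('w \<Rightarrow> 's) \<Rightarrow> 'w set \<Rightarrow> ('w \<Rightarrow> rat) \<Rightarrow> 's \<Rightarrow> rat" where
  "fibre_sum \<sigma> M f s = (\<Sum>w\<in>{w \<in> M. \<sigma> w = s}. f w)"

text \<open>Evaluating at this substitution isolates the coefficient of a single signature.\<close>

definition edge_indicator :: "('a, 'b) monoid_scheme \<Rightarrow> (nat \<Rightarrow> 'a \<times> 'a) \<Rightarrow> nat \<Rightarrow> 'a \<Rightarrow> 'a mat" where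
  "edge_indicator G e i g x y = (if x \<in> carrier G \<and> y \<in> carrier G \<and> y = x \<otimes>\<^bsub>G\<^esub> g
    then if e i = (x, y) then 1 else 0 else 0)"

context group
begin

lemma signature_mem:
  assumes "w \<in> mlmon G n"
  shows "fst (signature G w) \<in> carrier G" "snd (signature G w) \<in> edge_seqs (carrier G) n"
proof -
  have letters: "\<forall>l\<in>set w. fst (snd l) \<in> carrier G"
    using assms unfolding mlmon_def by auto
  then show "fst (signature G w) \<in> carrier G"
    by (simp add: signature_def walk_end_closed)
  show "snd (signature G w) \<in> edge_seqs (carrier G) n"
    using walk_edges_closed[OF one_closed letters] walk_edges_undefined[of _ w G \<one>]
    unfolding signature_def edge_seqs_def mlmon_indices[OF assms] by (auto simp: PiE_iff extensional_def)
qed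

lemma eval_word_signature:
  assumes "finite (carrier G)" "graded_subst G A" "w \<in> mlmon G n" "a \<in> carrier G"
  shows "eval_word G A w a b = signature_matrix G A n (signature G w) a b"
proof -
  have letters: "\<forall>l\<in>set w. fst (snd l) \<in> carrier G"
    using assms(3) unfolding mlmon_def by auto
  have "eval_word G A w (a \<otimes> \<one>) b = (if b = walk_end G (a \<otimes> \<one>) w
      then \<Prod>j\<in>{1..n}. edge_entry G A j (walk_edges G (a \<otimes> \<one>) w j) else 0)"
    using eval_word_walk[OF assms(1,2) _ _ mlmon_distinct[OF assms(3)], of "a \<otimes> \<one>" b]
      assms(4) mlmon_gletter[OF assms(3)] unfolding mlmon_indices[OF assms(3)] by simp
  also have "\<dots> = signature_matrix G A n (signature G w) a b"
    using walk_translate[OF assms(4) one_closed letters] mlmon_indices[OF assms(3)]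
    by (auto simp: signature_matrix_def signature_def intro!: prod.cong)
  finally show ?thesis
    using assms(4) by simp
qed

lemma eval_poly_signature:
  assumes fin: "finite (carrier G)" and f: "f \<in> Pn G n" and A: "graded_subst G A"
    and a: "a \<in> carrier G"
  shows "eval_poly G A f a b = (\<Sum>s\<in>signatures G n.
    of_rat (fibre_sum (signature G) (mlmon G n) f s) * signature_matrix G A n s a b)"
proof -
  have "{w. f w \<noteq> 0} \<subseteq> mlmon G n"
    using f unfolding Pn_def by auto
  then have "eval_poly G A f a b = (\<Sum>w\<in>mlmon G n. of_rat (f w) * eval_word G A w a b)"
    unfolding eval_poly_def by (intro sum.mono_neutral_left finite_mlmon[OF fin]) auto
  also have "\<dots> = (\<Sum>w\<in>mlmon G n. of_rat (f w) * signature_matrix G A n (signature G w) a b)"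
    using eval_word_signature[OF fin A _ a] by simp
  also have "\<dots> = (\<Sum>s\<in>signature G ` mlmon G n. \<Sum>w\<in>{w \<in> mlmon G n. signature G w = s}.
      of_rat (f w) * signature_matrix G A n (signature G w) a b)"
    by (rule sum.image_gen[OF finite_mlmon[OF fin]])
  also have "\<dots> = (\<Sum>s\<in>signatures G n. \<Sum>w\<in>{w \<in> mlmon G n. signature G w = s}.
      of_rat (f w) * signature_matrix G A n s a b)"
    unfolding signatures_def by (intro sum.cong refl) auto
  finally show ?thesis
    by (simp add: fibre_sum_def of_rat_sum sum_distrib_right)
qed

lemma graded_subst_edge_indicator: "graded_subst G (edge_indicator G e)"
  unfolding graded_subst_def graded_comp_def
proof (intro allI impI CollectI)
  fix i g assume "g \<in> carrier G"
  show "\<exists>d. edge_indicator G e i g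
      = (\<lambda>a b. if a \<in> carrier G \<and> b \<in> carrier G \<and> b = a \<otimes> g then d a else 0)"
    by (rule exI[of _ "\<lambda>x. if e i = (x, x \<otimes> g) then 1 else 0"]) (use \<open>g \<in> carrier G\<close> in \<open>auto simp: edge_indicator_def fun_eq_iff\<close>)
qed

lemma signature_matrix_edge_indicator:
  assumes s: "s \<in> carrier G \<times> edge_seqs (carrier G) n" and e: "e \<in> edge_seqs (carrier G) n"
  shows "signature_matrix G (edge_indicator G e) n s \<one> t = (if s = (t, e) then 1 else 0)"
proof -
  obtain t' e' where s': "s = (t', e')" "t' \<in> carrier G" "e' \<in> edge_seqs (carrier G) n"
    using s by auto
  have "edge_entry G (edge_indicator G e) j (\<one> \<otimes> fst (e' j), \<one> \<otimes> snd (e' j))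
      = (if e j = e' j then 1 else 0)" if "j \<in> {1..n}" for j
  proof -
    have "e' j \<in> carrier G \<times> carrier G"
      using s'(3) that unfolding edge_seqs_def by (rule PiE_mem)
    then obtain x y where xy: "e' j = (x, y)" "x \<in> carrier G" "y \<in> carrier G"
      by auto
    then have "x \<in> carrier G \<and> y \<in> carrier G \<and> y = x \<otimes> (inv x \<otimes> y)"
      by (simp add: m_assoc[symmetric])
    then show ?thesis
      unfolding edge_entry_def edge_indicator_def xy(1) fst_conv snd_conv l_one[OF xy(2)] l_one[OF xy(3)]
      by (simp only: if_True simp_thms)
  qed
  then have "(\<Prod>j\<in>{1..n}. edge_entry G (edge_indicator G e) j (\<one> \<otimes> fst (e' j), \<one> \<otimes> snd (e' j)))
      = (\<Prod>j\<in>{1..n}. if e j = e' j then 1 else 0)"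
    by (rule prod.cong[OF refl])
  also have "\<dots> = (if e = e' then 1 else 0)"
    using e s'(3) unfolding edge_seqs_def by (rule prod_indicator_eq_PiE[OF finite_atLeastAtMost])
  finally show ?thesis
    using s'(1,2) by (auto simp: signature_matrix_def)
qed

lemma gid_iff_fibre_sums:
  assumes fin: "finite (carrier G)" and f: "f \<in> Pn G n"
  shows "f \<in> gid G \<longleftrightarrow> (\<forall>s\<in>signatures G n. fibre_sum (signature G) (mlmon G n) f s = 0)"
proof
  assume "\<forall>s\<in>signatures G n. fibre_sum (signature G) (mlmon G n) f s = 0"
  then show "f \<in> gid G"
    using f eval_poly_signature[OF fin f] unfolding gid_def Pn_def by auto
next
  assume gid: "f \<in> gid G"
  show "\<forall>s\<in>signatures G n. fibre_sum (signature G) (mlmon G n) f s = 0"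
  proof
    fix s assume s: "s \<in> signatures G n"
    obtain t e where te: "s = (t, e)"
      by (cases s)
    have sigs: "signatures G n \<subseteq> carrier G \<times> edge_seqs (carrier G) n"
      unfolding signatures_def image_subset_iff mem_Times_iff using signature_mem by blast
    have "eval_poly G (edge_indicator G e) f \<one> t
        = (\<Sum>s'\<in>signatures G n. if s' = s then of_rat (fibre_sum (signature G) (mlmon G n) f s') else 0)"
      unfolding eval_poly_signature[OF fin f graded_subst_edge_indicator one_closed]
    proof (intro sum.cong refl)
      fix s' assume "s' \<in> signatures G n"
      then have "s' \<in> carrier G \<times> edge_seqs (carrier G) n" "e \<in> edge_seqs (carrier G) n"
        using sigs s te by auto
      then show "of_rat (fibre_sum (signature G) (mlmon G n) f s')
          * signature_matrix G (edge_indicator G e) n s' \<one> t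
        = (if s' = s then of_rat (fibre_sum (signature G) (mlmon G n) f s') else 0)"
        by (simp add: signature_matrix_edge_indicator te)
    qed
    also have "\<dots> = of_rat (fibre_sum (signature G) (mlmon G n) f s)"
      using s finite_mlmon[OF fin] by (simp add: signatures_def)
    finally have "of_rat (fibre_sum (signature G) (mlmon G n) f s)
        = eval_poly G (edge_indicator G e) f \<one> t"
      by simp
    also have "\<dots> = 0"
      using gid graded_subst_edge_indicator s sigs unfolding gid_def te by blast
    finally show "fibre_sum (signature G) (mlmon G n) f s = 0"
      by simp
  qed
qed

end

section \<open>Dimensions of spaces of coefficient functions\<close>

interpretation qspace: vector_space qscale
  by unfold_locales (simp_all add: qscale_def fun_eq_iff algebra_simps)

definition supported_on :: "'a word set \<Rightarrow> 'a fpoly set" where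
  "supported_on M = {f. \<forall>w. f w \<noteq> 0 \<longrightarrow> w \<in> M}"

definition unit_poly :: "'a word \<Rightarrow> 'a fpoly" where
  "unit_poly w = (\<lambda>v. if v = w then 1 else 0)"

lemma qscale_sum_apply: "(\<Sum>x\<in>A. qscale (u x) (f x)) v = (\<Sum>x\<in>A. u x * f x v)"
  by (induction A rule: infinite_finite_induct) (auto simp: qscale_def)

lemma qdim_eq_card_of_unit_family:
  assumes N: "finite N" and sub: "b ` N \<subseteq> V"
    and span: "\<And>f. f \<in> V \<Longrightarrow> f = (\<Sum>w\<in>N. qscale (f w) (b w))"
    and unit: "\<And>v w. v \<in> N \<Longrightarrow> w \<in> N \<Longrightarrow> b w v = (if v = w then 1 else 0)"
  shows "qdim V = card N"
proof -
  have inj: "inj_on b N"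
    by (rule inj_onI) (metis unit one_neq_zero)
  have "qspace.dim V = card (b ` N)"
  proof (rule qspace.dim_unique[OF sub])
    show "V \<subseteq> qspace.span (b ` N)"
    proof
      fix f assume "f \<in> V"
      have "(\<Sum>w\<in>N. qscale (f w) (b w)) \<in> qspace.span (b ` N)"
        by (intro qspace.span_sum qspace.span_scale qspace.span_base) auto
      then show "f \<in> qspace.span (b ` N)"
        using span[OF \<open>f \<in> V\<close>] by simp
    qed
    show "qspace.independent (b ` N)"
    proof (rule qspace.independent_if_scalars_zero)
      fix u x assume zero: "(\<Sum>x\<in>b ` N. qscale (u x) x) = 0" and "x \<in> b ` N"
      then obtain v where v: "v \<in> N" "x = b v"
        by auto
      have "0 = (\<Sum>w\<in>N. u (b w) * b w v)"
        using fun_cong[OF zero, of v] by (simp add: qscale_sum_apply sum.reindex inj)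
      also have "\<dots> = (\<Sum>w\<in>N. if v = w then u (b w) else 0)"
        using v(1) by (intro sum.cong) (auto simp: unit)
      also have "\<dots> = u x"
        using v N by simp
      finally show "u x = 0"
        by simp
    qed (use N in simp)
  qed simp
  then show ?thesis
    by (simp add: qdim_def card_image inj)
qed

lemma qdim_supported_on:
  assumes "finite M"
  shows "qdim (supported_on M) = card M"
proof (rule qdim_eq_card_of_unit_family[OF assms])
  show "unit_poly ` M \<subseteq> supported_on M"
    by (auto simp: supported_on_def unit_poly_def split: if_splits)
  fix f assume "f \<in> supported_on M"
  then show "f = (\<Sum>w\<in>M. qscale (f w) (unit_poly w))"
    using assms by (auto simp: fun_eq_iff qscale_sum_apply unit_poly_def supported_on_def if_distrib
        sum.delta cong: if_cong)
qed (simp add: unit_poly_def)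

lemma fibre_sum_unit_poly:
  "finite M \<Longrightarrow> fibre_sum \<sigma> M (unit_poly v) s = (if v \<in> M \<and> \<sigma> v = s then 1 else 0)"
  by (simp add: fibre_sum_def unit_poly_def sum.delta)

lemma fibre_sum_diff: "fibre_sum \<sigma> M (f - g) s = fibre_sum \<sigma> M f s - fibre_sum \<sigma> M g s"
  by (simp add: fibre_sum_def sum_subtractf)

lemma fibre_sum_rep_split:
  assumes M: "finite M" and rep: "\<And>s. s \<in> \<sigma> ` M \<Longrightarrow> rep s \<in> M \<and> \<sigma> (rep s) = s"
    and s: "s \<in> \<sigma> ` M"
  shows "fibre_sum \<sigma> M f s = f (rep s) + (\<Sum>w\<in>{w \<in> M - rep ` \<sigma> ` M. \<sigma> w = s}. f w)"
proof -
  have "{w \<in> M. \<sigma> w = s} = insert (rep s) {w \<in> M - rep ` \<sigma> ` M. \<sigma> w = s}"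
    using rep s by auto
  moreover have "finite {w \<in> M - rep ` \<sigma> ` M. \<sigma> w = s}" "rep s \<notin> {w \<in> M - rep ` \<sigma> ` M. \<sigma> w = s}"
    using M s by auto
  ultimately show ?thesis
    unfolding fibre_sum_def by simp
qed

lemma fibre_sums_zero_expansion:
  assumes M: "finite M" and rep: "\<And>s. s \<in> \<sigma> ` M \<Longrightarrow> rep s \<in> M \<and> \<sigma> (rep s) = s"
    and f: "f \<in> supported_on M" "\<forall>s\<in>\<sigma> ` M. fibre_sum \<sigma> M f s = 0"
  shows "f = (\<Sum>w\<in>M - rep ` \<sigma> ` M. qscale (f w) (unit_poly w - unit_poly (rep (\<sigma> w))))"
proof
  fix v
  let ?N = "M - rep ` \<sigma> ` M"
  have N: "finite ?N"
    using M by simp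
  have "(\<Sum>w\<in>?N. qscale (f w) (unit_poly w - unit_poly (rep (\<sigma> w)))) v
      = (\<Sum>w\<in>?N. (if w = v then f w else 0) - (if rep (\<sigma> w) = v then f w else 0))"
    unfolding qscale_sum_apply by (intro sum.cong refl) (simp add: unit_poly_def)
  also have "\<dots> = (\<Sum>w\<in>?N. if w = v then f w else 0) - (\<Sum>w\<in>?N. if rep (\<sigma> w) = v then f w else 0)"
    by (rule sum_subtractf)
  also have "\<dots> = (if v \<in> ?N then f v else 0) - (\<Sum>w\<in>{w \<in> ?N. rep (\<sigma> w) = v}. f w)"
    unfolding sum.delta[OF N] sum.inter_filter[OF N, symmetric] by (rule refl)
  also have "\<dots> = f v"
  proof (cases "v \<in> rep ` \<sigma> ` M")
    case True
    then obtain s where s: "s \<in> \<sigma> ` M" "v = rep s"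
      by auto
    have "{w \<in> ?N. rep (\<sigma> w) = v} = {w \<in> ?N. \<sigma> w = s}"
      using rep s by (auto, metis image_eqI)
    moreover have "0 = f v + (\<Sum>w\<in>{w \<in> ?N. \<sigma> w = s}. f w)"
      using fibre_sum_rep_split[OF M rep s(1), of f] f(2) s by simp
    ultimately show ?thesis
      using s by auto
  next
    case False
    then have empty: "{w \<in> ?N. rep (\<sigma> w) = v} = {}"
      by auto
    have "v \<notin> ?N \<Longrightarrow> f v = 0"
      using False f(1) unfolding supported_on_def by auto
    then show ?thesis
      unfolding empty by auto
  qed
  finally show "f v = (\<Sum>w\<in>?N. qscale (f w) (unit_poly w - unit_poly (rep (\<sigma> w)))) v"
    by simp
qed

lemma qdim_fibre_sums_zero:
  assumes M: "finite M"
  shows "qdim {f \<in> supported_on M. \<forall>s\<in>\<sigma> ` M. fibre_sum \<sigma> M f s = 0} = card M - card (\<sigma> ` M)"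
proof -
  define rep where "rep s = (SOME w. w \<in> M \<and> \<sigma> w = s)" for s
  have rep: "rep s \<in> M \<and> \<sigma> (rep s) = s" if "s \<in> \<sigma> ` M" for s
    using someI_ex[of "\<lambda>w. w \<in> M \<and> \<sigma> w = s"] that unfolding rep_def by auto
  then have inj: "inj_on rep (\<sigma> ` M)"
    by (metis inj_onI)
  define N where "N = M - rep ` \<sigma> ` M"
  define b where "b w = unit_poly w - unit_poly (rep (\<sigma> w))" for w
  let ?K = "{f \<in> supported_on M. \<forall>s\<in>\<sigma> ` M. fibre_sum \<sigma> M f s = 0}"
  have "qdim ?K = card N"
  proof (rule qdim_eq_card_of_unit_family)
    show "finite N"
      using M by (simp add: N_def)
    show "b ` N \<subseteq> ?K"
    proof
      fix x assume "x \<in> b ` N"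
      then obtain w where w: "w \<in> M" "x = b w"
        by (auto simp: N_def)
      then have "rep (\<sigma> w) \<in> M" "\<sigma> (rep (\<sigma> w)) = \<sigma> w"
        using rep by auto
      then have "x \<in> supported_on M"
        using w by (auto simp: b_def supported_on_def unit_poly_def split: if_splits)
      moreover have "fibre_sum \<sigma> M x s = 0" for s
        using w M \<open>rep (\<sigma> w) \<in> M\<close> \<open>\<sigma> (rep (\<sigma> w)) = \<sigma> w\<close>
        by (simp add: b_def fibre_sum_diff fibre_sum_unit_poly)
      ultimately show "x \<in> ?K"
        by simp
    qed
    show "b w v = (if v = w then 1 else 0)" if "v \<in> N" "w \<in> N" for v w
      using that rep by (auto simp: N_def b_def unit_poly_def)
    show "f = (\<Sum>w\<in>N. qscale (f w) (b w))" if "f \<in> ?K" for f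
      using fibre_sums_zero_expansion[OF M rep] that unfolding N_def b_def by blast
  qed
  also have "card N = card M - card (\<sigma> ` M)"
    unfolding N_def using M rep inj by (subst card_Diff_subset) (auto simp: card_image)
  finally show ?thesis .
qed

lemma Pn_eq_supported_on:
  assumes "finite (carrier G)"
  shows "Pn G n = supported_on (mlmon G n)"
proof -
  have "finite {w. f w \<noteq> 0}" if "f \<in> supported_on (mlmon G n)" for f
    using that finite_mlmon[OF assms] unfolding supported_on_def by (auto intro: finite_subset)
  then show ?thesis
    unfolding Pn_def free_alg_def supported_on_def by (auto intro: mlmon_gletter)
qed

lemma (in group) gcodim_eq_card_signatures:
  assumes fin: "finite (carrier G)"
  shows "gcodim G n = card (signatures G n)"
proof -
  let ?M = "mlmon G n"
  have kernel: "Pn G n \<inter> gid G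
      = {f \<in> supported_on ?M. \<forall>s\<in>signature G ` ?M. fibre_sum (signature G) ?M f s = 0}"
    using gid_iff_fibre_sums[OF fin] Pn_eq_supported_on[OF fin] by (auto simp: signatures_def)
  have "qdim (Pn G n \<inter> gid G) = card ?M - card (signatures G n)"
    unfolding kernel signatures_def by (rule qdim_fibre_sums_zero[OF finite_mlmon[OF fin]])
  moreover have "qdim (Pn G n) = card ?M"
    by (simp add: Pn_eq_supported_on[OF fin] qdim_supported_on finite_mlmon[OF fin])
  moreover have "card (signatures G n) \<le> card ?M"
    unfolding signatures_def using finite_mlmon[OF fin] by (rule card_image_le)
  ultimately show ?thesis
    unfolding gcodim_def by simp
qed


section \<open>Signatures as Euler trails\<close>

context group
begin

lemma odd_vertices_walk:
  "p \<in> carrier G \<Longrightarrow> \<forall>l\<in>set w. fst (snd l) \<in> carrier G \<Longrightarrow> distinct (map fst w) \<Longrightarrow>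
    odd_vertices (walk_edges G p w) (fst ` set w) = toggle p {walk_end G p w}"
proof (induction w arbitrary: p)
  case Nil
  then show ?case
    by (simp add: toggle_def)
next
  case (Cons l w)
  obtain i g s where l: "l = (i, g, s)"
    by (cases l)
  define q where "q = (if s then p \<otimes> inv g else p \<otimes> g)"
  define e where "e = (if s then (q, p) else (p, q))"
  have q: "q \<in> carrier G" and i: "i \<notin> fst ` set w"
    using Cons.prems l by (auto simp: q_def)
  have "odd_vertices ((walk_edges G q w)(i := e)) (fst ` set w) = odd_vertices (walk_edges G q w) (fst ` set w)"
    using i by (intro odd_vertices_cong) auto
  moreover have "toggle (fst e) (toggle (snd e) (toggle q X)) = toggle p X" for X
    by (simp add: e_def toggle_commute)
  ultimately have "odd_vertices ((walk_edges G q w)(i := e)) (insert i (fst ` set w))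
      = toggle p {walk_end G q w}"
    using Cons.IH[OF q] Cons.prems i by (simp add: odd_vertices_insert l)
  moreover have "walk_edges G p (l # w) = (walk_edges G q w)(i := e)"
    "walk_end G p (l # w) = walk_end G q w" "fst ` set (l # w) = insert i (fst ` set w)"
    by (simp_all add: l q_def e_def Let_def)
  ultimately show ?case
    by (simp only:)
qed

lemma signatures_subset_euler_candidates: "signatures G n \<subseteq> euler_candidates (carrier G) \<one> n"
proof
  fix s assume "s \<in> signatures G n"
  then obtain w where w: "w \<in> mlmon G n" "s = signature G w"
    by (auto simp: signatures_def)
  have "\<forall>l\<in>set w. fst (snd l) \<in> carrier G"
    using w(1) unfolding mlmon_def by auto
  from odd_vertices_walk[OF one_closed this mlmon_distinct[OF w(1)]]
  have "odd_vertices (walk_edges G \<one> w) {1..n} = toggle \<one> {walk_end G \<one> w}"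
    unfolding mlmon_indices[OF w(1)] .
  then show "s \<in> euler_candidates (carrier G) \<one> n"
    using signature_mem[OF w(1)] unfolding w(2) euler_candidates_def signature_def by simp
qed

definition trail_word :: "(nat \<Rightarrow> 'a \<times> 'a) \<Rightarrow> (nat \<times> bool) list \<Rightarrow> 'a word" where
  "trail_word e ws = map (\<lambda>(i, b). (i, inv fst (e i) \<otimes> snd (e i), b)) ws"

lemma map_fst_trail_word: "map fst (trail_word e ws) = map fst ws"
  by (induction ws) (auto simp: trail_word_def)

lemma walk_trail_word:
  "p \<in> carrier G \<Longrightarrow> \<forall>i\<in>fst ` set ws. e i \<in> carrier G \<times> carrier G \<Longrightarrow> trail_end e p ws = Some t \<Longrightarrow>
    walk_end G p (trail_word e ws) = t \<and> (\<forall>i\<in>fst ` set ws. walk_edges G p (trail_word e ws) i = e i)"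
proof (induction ws arbitrary: p)
  case Nil
  then show ?case
    by (simp add: trail_word_def)
next
  case (Cons a ws)
  obtain i b where a: "a = (i, b)"
    by (cases a)
  obtain x y where xy: "e i = (x, y)" "x \<in> carrier G" "y \<in> carrier G"
    using Cons.prems(2) a by auto
  define q where "q = (if b then x else y)"
  have p: "p = (if b then y else x)" and rest: "trail_end e q ws = Some t"
    using Cons.prems(3) by (auto simp: a xy q_def split: if_splits)
  have "x \<otimes> (inv x \<otimes> y) = y" "y \<otimes> inv (inv x \<otimes> y) = x"
    using xy by (simp_all add: inv_mult_group m_assoc[symmetric])
  then have step: "(if b then p \<otimes> inv (inv x \<otimes> y) else p \<otimes> (inv x \<otimes> y)) = q"
    "(if b then (q, p) else (p, q)) = (x, y)"
    by (simp_all add: p q_def)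
  have "q \<in> carrier G"
    using xy by (simp add: q_def)
  from Cons.IH[OF this _ rest] Cons.prems(2)
  have "walk_end G q (trail_word e ws) = t \<and> (\<forall>i\<in>fst ` set ws. walk_edges G q (trail_word e ws) i = e i)"
    by simp
  then show ?case
    using step xy(1) by (simp add: a trail_word_def Let_def)
qed

lemma euler_candidates_with_star_subset_signatures:
  assumes "(t, e) \<in> euler_candidates (carrier G) \<one> n" "has_star (carrier G) \<one> n e"
  shows "(t, e) \<in> signatures G n"
proof -
  have e: "e \<in> edge_seqs (carrier G) n" and odd: "odd_vertices e {1..n} = toggle \<one> {t}"
    using assms(1) by (auto simp: euler_candidates_def)
  obtain ws where ws: "euler_trail e {1..n} \<one> t ws"
    using euler_trail_exists[OF finite_atLeastAtMost odd connected_from_star[OF e assms(2)]] by blast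
  then have ws_indices: "fst ` set ws = {1..n}" "distinct (map fst ws)"
    unfolding euler_trail_def by simp_all
  have edges: "\<forall>i\<in>fst ` set ws. e i \<in> carrier G \<times> carrier G"
    using e unfolding ws_indices(1) edge_seqs_def PiE_iff by blast
  define w where "w = trail_word e ws"
  have indices: "fst ` set w = {1..n}" "distinct (map fst w)"
    using ws_indices map_fst_trail_word[of e ws] unfolding w_def by (simp_all only: set_map[symmetric])
  moreover have "\<forall>l\<in>set w. fst (snd l) \<in> carrier G"
    using edges unfolding w_def trail_word_def by auto
  ultimately have w_mem: "w \<in> mlmon G n"
    unfolding mlmon_def by simp
  have "trail_end e \<one> ws = Some t"
    using ws unfolding euler_trail_def by blast
  then have walk: "walk_end G \<one> w = t" "\<forall>i\<in>{1..n}. walk_edges G \<one> w i = e i"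
    using walk_trail_word[OF one_closed edges] unfolding w_def ws_indices(1) by blast+
  have "walk_edges G \<one> w i = e i" for i
  proof (cases "i \<in> {1..n}")
    case False
    then have "walk_edges G \<one> w i = undefined"
      using walk_edges_undefined[of i w G \<one>] indices(1) by blast
    moreover have "e i = undefined"
      using e False unfolding edge_seqs_def by (rule PiE_arb)
    ultimately show ?thesis
      by simp
  qed (use walk in blast)
  then have "signature G w = (t, e)"
    using walk(1) by (simp add: signature_def fun_eq_iff)
  then show ?thesis
    using w_mem unfolding signatures_def by force
qed

end

lemma (in group) card_euler_candidates_le:
  assumes fin: "finite (carrier G)"
  shows "card (euler_candidates (carrier G) \<one> n)
    \<le> card (signatures G n) + card (carrier G) ^ 2 * (card (carrier G) ^ 2 - 1) ^ n"
proof -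
  let ?E = "euler_candidates (carrier G) \<one> n"
  let ?B = "carrier G \<times> {e \<in> edge_seqs (carrier G) n. \<not> has_star (carrier G) \<one> n e}"
  have "finite ?E"
    using fin finite_edge_seqs[OF fin] by (auto simp: euler_candidates_def)
  then have "finite (signatures G n)"
    using signatures_subset_euler_candidates by (rule finite_subset[rotated])
  moreover have "finite ?B"
    using fin finite_edge_seqs[OF fin] by auto
  moreover have "?E \<subseteq> signatures G n \<union> ?B"
    using euler_candidates_with_star_subset_signatures by (auto simp: euler_candidates_def)
  ultimately have "card ?E \<le> card (signatures G n \<union> ?B)"
    by (intro card_mono) auto
  also have "\<dots> \<le> card (signatures G n) + card ?B"
    by (rule card_Un_le)
  also have "card ?B \<le> card (carrier G) ^ 2 * (card (carrier G) ^ 2 - 1) ^ n"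
    using card_without_star[OF fin one_closed, of n] by (simp add: card_cartesian_product power2_eq_square)
  finally show ?thesis
    by simp
qed

lemma (in group) card_signatures_estimate:
  assumes fin: "finite (carrier G)" and k2: "card (carrier G) \<ge> 2"
  shows "\<bar>real (card (signatures G n))
      - real (card (carrier G)) / 2 ^ (card (carrier G) - 1) * real (card (carrier G)) ^ (2 * n)\<bar>
    \<le> (real (card (carrier G)) + real (card (carrier G)) ^ 2) * (real (card (carrier G)) ^ 2 - 1) ^ n"
proof -
  let ?k = "real (card (carrier G))"
  let ?E = "euler_candidates (carrier G) \<one> n"
  have "card (signatures G n) \<le> card ?E"
    using fin finite_edge_seqs[OF fin] signatures_subset_euler_candidates
    by (intro card_mono) (auto simp: euler_candidates_def)
  moreover have "1 \<le> card (carrier G) ^ 2"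
    using k2 by (simp add: Suc_le_eq)
  then have "real (card (carrier G) ^ 2 * (card (carrier G) ^ 2 - 1) ^ n) = ?k ^ 2 * (?k ^ 2 - 1) ^ n"
    by simp
  ultimately have sig: "\<bar>real (card (signatures G n)) - real (card ?E)\<bar> \<le> ?k ^ 2 * (?k ^ 2 - 1) ^ n"
    using card_euler_candidates_le[OF fin, of n] by linarith
  have "(?k - 2) ^ (2 * n) = ((?k - 2) ^ 2) ^ n"
    by (simp add: power_mult)
  also have "\<dots> \<le> (?k ^ 2 - 1) ^ n"
  proof (rule power_mono)
    show "(?k - 2) ^ 2 \<le> ?k ^ 2 - 1"
      using k2 by (simp add: power2_eq_square algebra_simps)
  qed simp
  finally have "?k * (?k - 2) ^ (2 * n) \<le> ?k * (?k ^ 2 - 1) ^ n"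
    by (simp add: mult_left_mono)
  with card_euler_candidates_estimate[OF fin one_closed, of n] sig show ?thesis
    unfolding abs_le_iff distrib_right by linarith
qed

theorem mainTheorem17:
  fixes G :: "('a, 'b) monoid_scheme"
  assumes "group G" and "finite (carrier G)" and "card (carrier G) \<ge> 2"
  shows "(\<lambda>n. real (gcodim G n)) \<sim>[at_top]
         (\<lambda>n. real (card (carrier G)) / 2 ^ (card (carrier G) - 1) * real (card (carrier G)) ^ (2 * n))"
proof -
  interpret group G by fact
  let ?k = "real (card (carrier G))"
  have "(\<lambda>n. real (gcodim G n)) \<sim>[at_top] (\<lambda>n. ?k / 2 ^ (card (carrier G) - 1) * (?k ^ 2) ^ n)"
  proof (rule asymp_equiv_geometric)
    show "?k / 2 ^ (card (carrier G) - 1) > 0" "0 \<le> ?k ^ 2 - 1" "?k ^ 2 - 1 < ?k ^ 2"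
      using assms(3) by auto
    show "\<bar>real (gcodim G n) - ?k / 2 ^ (card (carrier G) - 1) * (?k ^ 2) ^ n\<bar>
        \<le> (?k + ?k ^ 2) * (?k ^ 2 - 1) ^ n" for n
      using card_signatures_estimate[OF assms(2,3), of n]
      by (simp add: gcodim_eq_card_signatures[OF assms(2)] power_mult)
  qed
  then show ?thesis
    by (simp add: power_mult)
qed

end
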